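(* Let $(p_n)$ be integers diverging to infinity and $(\kappa_n)$ an arbitrary sequence in $(0,\infty)$. (i) If $\kappa_n/p_n\to\infty$, then $e_{n1}=1+o(1)$, $\tilde e_{n2}=O(p_n/\kappa_n^2)$ and $f_{n2}=p_n/\kappa_n+o(p_n/\kappa_n)$. (ii) If $\kappa_n/p_n\to\xi>0$, then, with $c_\xi:=\frac12+\sqrt{\frac14+\xi^2}$, $e_{n1}\to\xi/c_\xi$, $\tilde e_{n2}=O(1/p_n)$ and $f_{n2}=1/c_\xi+o(1)$. (iii) If $\kappa_n/p_n\to0$, then $e_{n1}=\kappa_n/p_n+O(\kappa_n^3/p_n^3)$, $\tilde e_{n2}=1/p_n+o(1/p_n)$ and $f_{n2}=1+o(1)$.
   Context: For integer $p\ge2$ and $\kappa>0$, let $c_{p,\kappa}=1/\int_{-1}^1(1-t^2)^{(p-3)/2}e^{\kappa t}dt$. Let $U_n$ have density $u\mapsto c_{p_n,\kappa_n}(1-u^2)^{(p_n-3)/2}e^{\kappa_nu}$ on $[-1,1]$; $e_{n1}=E[U_n]$, $\tilde e_{n2}=\mathrm{Var}(U_n)$, $f_{n2}=E[1-U_n^2]$. *)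

theory Defs
  imports "HOL-Analysis.Analysis" "HOL-Library.Landau_Symbols"
begin

definition vmf_weight :: "nat \<Rightarrow> real \<Rightarrow> real \<Rightarrow> real" where
  "vmf_weight p \<kappa> t = (1 - t\<^sup>2) powr ((real p - 3) / 2) * exp (\<kappa> * t)"

definition vmf_const :: "nat \<Rightarrow> real \<Rightarrow> real" where
  "vmf_const p \<kappa> = 1 / (LBINT t:{-1..1}. vmf_weight p \<kappa> t)"

definition vmf_expect :: "nat \<Rightarrow> real \<Rightarrow> (real \<Rightarrow> real) \<Rightarrow> real" where
  "vmf_expect p \<kappa> g = (LBINT t:{-1..1}. g t * (vmf_const p \<kappa> * vmf_weight p \<kappa> t))"

definition e1 :: "nat \<Rightarrow> real \<Rightarrow> real" where
  "e1 p \<kappa> = vmf_expect p \<kappa> (\<lambda>t. t)"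

definition e2t :: "nat \<Rightarrow> real \<Rightarrow> real" where
  "e2t p \<kappa> = vmf_expect p \<kappa> (\<lambda>t. (t - e1 p \<kappa>)\<^sup>2)"

definition f2 :: "nat \<Rightarrow> real \<Rightarrow> real" where
  "f2 p \<kappa> = vmf_expect p \<kappa> (\<lambda>t. 1 - t\<^sup>2)"

end

theory Submission
  imports Defs
begin

text \<open>
  Write \<open>Z\<^sub>k = \<integral> t\<^sup>k (1 - t\<^sup>2)\<^bsup>(p-3)/2\<^esup> e\<^sup>\<kappa>\<^sup>t dt\<close> over \<open>[-1, 1]\<close>. Differentiating
  \<open>t\<^sup>k (1 - t\<^sup>2)\<^bsup>(p-1)/2\<^esup> e\<^sup>\<kappa>\<^sup>t\<close>, which vanishes at \<open>\<plusminus>1\<close>, gives linear recurrences between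
  the \<open>Z\<^sub>k\<close>. For \<open>k = 0, 1\<close> they say \<open>\<kappa> f\<^sub>2 = (p - 1) e\<^sub>1\<close> and
  \<open>f\<^sub>2 (p + \<kappa> e\<^sub>1(p + 2)) = p - 1\<close>, hence the continued fraction
  \<open>e\<^sub>1(p) = \<kappa> / (p + \<kappa> e\<^sub>1(p + 2))\<close>; together with \<open>Var = 1 - f\<^sub>2 - e\<^sub>1\<^sup>2 \<ge> 0\<close> this also
  gives a recursion for the variance. Feeding the trivial bounds \<open>0 \<le> e\<^sub>1 \<le> 1\<close>,
  \<open>0 \<le> Var \<le> 1/p\<close> at \<open>p + 2\<close> back into these recursions yields two-sided bounds on
  \<open>e\<^sub>1\<close>, \<open>f\<^sub>2\<close> and \<open>Var\<close> that are uniform in \<open>p \<ge> 4\<close> and \<open>\<kappa> > 0\<close>. In the proportional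
  regime, \<open>e\<^sub>1\<^sup>2 + ((p - 1)/\<kappa>) e\<^sub>1 = e\<^sub>1\<^sup>2 + f\<^sub>2 \<le> 1\<close> squeezes \<open>e\<^sub>1\<close> between values of the
  positive root of \<open>x\<^sup>2 + b x = 1\<close> at \<open>b \<approx> p/\<kappa>\<close>, both tending to \<open>\<xi> / c\<^sub>\<xi>\<close>.
\<close>

lemma vmf_weight_nonneg: "0 \<le> vmf_weight p \<kappa> t"
  unfolding vmf_weight_def by simp

lemma vmf_weight_add2:
  assumes "t \<in> {-1..1}"
  shows "vmf_weight (p + 2) \<kappa> t = (1 - t\<^sup>2) * vmf_weight p \<kappa> t"
proof -
  have e: "(real (p + 2) - 3) / 2 = (real p - 3) / 2 + 1" by (simp add: field_simps)
  have "0 \<le> 1 - t\<^sup>2" using assms by (simp add: abs_square_le_1 abs_le_iff)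
  then show ?thesis unfolding vmf_weight_def e powr_add by (simp add: powr_one)
qed

lemma vmf_weight_add2_endpoints:
  "vmf_weight (p + 2) \<kappa> 1 = 0" "vmf_weight (p + 2) \<kappa> (-1) = 0"
  unfolding vmf_weight_def by simp_all

text \<open>For \<open>p = 3\<close> the weight is discontinuous at \<open>\<plusminus>1\<close>, because \<open>0 powr 0 = 0\<close>.\<close>
lemma continuous_on_vmf_weight: "4 \<le> p \<Longrightarrow> continuous_on {-1..1} (vmf_weight p \<kappa>)"
  unfolding vmf_weight_def
  by (intro continuous_intros continuous_on_powr') (auto simp: abs_square_le_1 abs_le_iff)

lemma vmf_weight_add2_has_real_derivative:
  assumes "t \<in> {-1<..<1}"
  shows "(vmf_weight (p + 2) \<kappa> has_real_derivative
           vmf_weight p \<kappa> t * (\<kappa> * (1 - t\<^sup>2) - (real p - 1) * t)) (at t)"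
proof -
  have pos: "0 < 1 - t\<^sup>2" using assms by (simp add: abs_square_less_1 abs_less_iff)
  have "((\<lambda>t. 1 - t\<^sup>2) has_real_derivative - 2 * t) (at t)"
    by (auto intro!: derivative_eq_intros)
  note d = DERIV_mult[OF DERIV_fun_powr[OF this pos, of "(real p - 1) / 2"]
      DERIV_cmult_Id[of \<kappa>, THEN DERIV_chain2[OF DERIV_exp]]]
  have w: "vmf_weight (p + 2) \<kappa> = (\<lambda>t. (1 - t\<^sup>2) powr ((real p - 1) / 2) * exp (\<kappa> * t))"
    unfolding vmf_weight_def by (auto simp: field_simps)
  have exponent: "(real p - 1) / 2 - of_nat 1 = (real p - 3) / 2" by (simp add: field_simps)
  have factor: "(1 - t\<^sup>2) powr ((real p - 1) / 2) = (1 - t\<^sup>2) * (1 - t\<^sup>2) powr ((real p - 3) / 2)"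
  proof -
    have e: "(real p - 1) / 2 = (real p - 3) / 2 + 1" by (simp add: field_simps)
    show ?thesis using pos unfolding e powr_add by (simp add: powr_one)
  qed
  show ?thesis unfolding w
    by (rule DERIV_cong[OF d]) (simp add: exponent factor vmf_weight_def field_simps)
qed

lemma vmf_expect_nonneg:
  assumes "\<And>t. t \<in> {-1..1} \<Longrightarrow> 0 \<le> g t"
  shows "0 \<le> vmf_expect p \<kappa> g"
proof -
  have "0 \<le> vmf_const p \<kappa>"
    unfolding vmf_const_def set_lebesgue_integral_def
    by (auto intro!: integral_nonneg_AE simp: vmf_weight_nonneg indicator_def)
  then show ?thesis
    unfolding vmf_expect_def set_lebesgue_integral_def
    by (auto intro!: integral_nonneg_AE simp: assms vmf_weight_nonneg indicator_def)
qed

definition vmf_moment :: "nat \<Rightarrow> real \<Rightarrow> nat \<Rightarrow> real" where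
  "vmf_moment p \<kappa> k = integral {-1..1} (\<lambda>t. t ^ k * vmf_weight p \<kappa> t)"

lemma has_integral_vmf_moment:
  "4 \<le> p \<Longrightarrow> ((\<lambda>t. t ^ k * vmf_weight p \<kappa> t) has_integral vmf_moment p \<kappa> k) {-1..1}"
  unfolding vmf_moment_def
  by (intro integrable_integral integrable_continuous_interval continuous_intros
      continuous_on_vmf_weight)

lemma vmf_moment_add2:
  assumes "4 \<le> p"
  shows "vmf_moment (p + 2) \<kappa> k = vmf_moment p \<kappa> k - vmf_moment p \<kappa> (k + 2)"
proof -
  have "vmf_moment (p + 2) \<kappa> k =
      integral {-1..1} (\<lambda>t. t ^ k * vmf_weight p \<kappa> t - t ^ (k + 2) * vmf_weight p \<kappa> t)"
    unfolding vmf_moment_def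
  proof (intro integral_cong)
    fix t :: real assume t: "t \<in> {-1..1}"
    show "t ^ k * vmf_weight (p + 2) \<kappa> t
        = t ^ k * vmf_weight p \<kappa> t - t ^ (k + 2) * vmf_weight p \<kappa> t"
      unfolding vmf_weight_add2[OF t] power_add by (simp add: algebra_simps)
  qed
  also have "\<dots> = vmf_moment p \<kappa> k - vmf_moment p \<kappa> (k + 2)"
    by (intro integral_unique has_integral_diff has_integral_vmf_moment assms)
  finally show ?thesis .
qed

lemma vmf_moment_0_pos:
  assumes "4 \<le> p" "0 < \<kappa>"
  shows "0 < vmf_moment p \<kappa> 0"
proof -
  let ?w = "vmf_weight p \<kappa>" and ?c = "(3/4 :: real) powr ((real p - 3) / 2)"
  have int: "?w integrable_on {0..1/2}"
    by (intro integrable_continuous_interval continuous_on_subset[OF continuous_on_vmf_weight]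
        assms) auto
  have "?c \<le> ?w t" if "t \<in> {0..1/2}" for t :: real
  proof -
    have "t\<^sup>2 \<le> (1/2)\<^sup>2" using that by (intro power_mono) auto
    then have "?c \<le> (1 - t\<^sup>2) powr ((real p - 3) / 2)"
      using assms by (intro powr_mono2) (auto simp: power2_eq_square)
    moreover have "1 \<le> exp (\<kappa> * t)" using that assms by auto
    ultimately show ?thesis unfolding vmf_weight_def
      by (metis mult_mono mult.right_neutral powr_ge_zero zero_le_one order_trans)
  qed
  then have "?c * (1/2) \<le> integral {0..1/2} ?w"
    using has_integral_le[OF has_integral_const_real[of ?c 0 "1/2"] integrable_integral[OF int]]
    by (simp add: mult.commute)
  also have "\<dots> \<le> integral {-1..1} ?w"
    by (intro integral_subset_le int integrable_continuous_interval continuous_on_vmf_weight assms)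
      (auto simp: vmf_weight_nonneg)
  finally have "?c * (1/2) \<le> vmf_moment p \<kappa> 0" unfolding vmf_moment_def by simp
  moreover have "0 < ?c * (1/2)" by simp
  ultimately show ?thesis by linarith
qed

lemma vmf_expect_eq_integral_div_moment:
  assumes "4 \<le> p" "continuous_on {-1..1} g"
  shows "vmf_expect p \<kappa> g = integral {-1..1} (\<lambda>t. g t * vmf_weight p \<kappa> t) / vmf_moment p \<kappa> 0"
proof -
  have lbint: "(LBINT t:{-1..1}. f t) = integral {-1..1} f"
    if "continuous_on {-1..1} f" for f :: "real \<Rightarrow> real"
    using set_borel_integral_eq_integral(2)[OF borel_integrable_atLeastAtMost'[OF that]] .
  have "vmf_expect p \<kappa> g = integral {-1..1} (\<lambda>t. vmf_const p \<kappa> * (g t * vmf_weight p \<kappa> t))"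
    unfolding vmf_expect_def
    by (subst lbint) (auto intro!: continuous_intros continuous_on_vmf_weight assms simp: ac_simps)
  moreover have "vmf_const p \<kappa> = 1 / vmf_moment p \<kappa> 0"
    unfolding vmf_const_def vmf_moment_def using lbint[OF continuous_on_vmf_weight[OF assms(1)]]
    by simp
  ultimately show ?thesis by simp
qed

lemma vmf_moment_recurrence:
  fixes \<kappa> :: real
  assumes "4 \<le> p"
  defines "Z \<equiv> vmf_moment p \<kappa>"
  shows "real k * (Z (k - 1) - Z (k + 1)) + \<kappa> * (Z k - Z (k + 2)) = (real p - 1) * Z (k + 1)"
proof -
  let ?w = "vmf_weight p \<kappa>"
  let ?F = "\<lambda>t. t ^ k * vmf_weight (p + 2) \<kappa> t"
  let ?f = "\<lambda>t. real k * t ^ (k - 1) * vmf_weight (p + 2) \<kappa> t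
                + t ^ k * (?w t * (\<kappa> * (1 - t\<^sup>2) - (real p - 1) * t))"
  let ?g = "\<lambda>t. real k * (t ^ (k - 1) * ?w t) - real k * (t ^ (k + 1) * ?w t)
      + \<kappa> * (t ^ k * ?w t) - \<kappa> * (t ^ (k + 2) * ?w t) - (real p - 1) * (t ^ (k + 1) * ?w t)"
  have "(?f has_integral ?F 1 - ?F (-1)) {-1..1}"
  proof (rule fundamental_theorem_of_calculus_interior)
    show "continuous_on {-1..1} ?F"
      using assms(1) by (intro continuous_intros continuous_on_vmf_weight) simp
    show "(?F has_vector_derivative ?f t) (at t)" if "t \<in> {-1<..<1}" for t
      using DERIV_mult[OF DERIV_pow vmf_weight_add2_has_real_derivative[OF that]]
      by (simp add: has_real_derivative_iff_has_vector_derivative mult.commute)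
  qed simp
  from this[unfolded vmf_weight_add2_endpoints] have "(?f has_integral 0) {-1..1}"
    by simp
  moreover have "?f t = ?g t" if "t \<in> {-1..1}" for t
  proof -
    have "real k * t ^ (k - 1) * t\<^sup>2 = real k * t ^ (k + 1)"
      by (cases k) (simp_all add: power2_eq_square)
    then show ?thesis
      unfolding vmf_weight_add2[OF that] by (simp add: algebra_simps power2_eq_square) metis
  qed
  ultimately have "(?g has_integral 0) {-1..1}"
    by (rule has_integral_eq[rotated])
  moreover have "(?g has_integral real k * Z (k - 1) - real k * Z (k + 1) + \<kappa> * Z k
      - \<kappa> * Z (k + 2) - (real p - 1) * Z (k + 1)) {-1..1}"
    unfolding Z_def
    by (intro has_integral_diff has_integral_add has_integral_mult_right
        has_integral_vmf_moment assms)
  ultimately have "real k * Z (k - 1) - real k * Z (k + 1) + \<kappa> * Z k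
      - \<kappa> * Z (k + 2) - (real p - 1) * Z (k + 1) = 0"
    by (rule has_integral_unique[rotated])
  then show ?thesis by (simp add: algebra_simps)
qed

lemma e1_eq_moment_ratio: "4 \<le> p \<Longrightarrow> e1 p \<kappa> = vmf_moment p \<kappa> 1 / vmf_moment p \<kappa> 0"
  unfolding e1_def vmf_moment_def
  by (subst vmf_expect_eq_integral_div_moment) (auto intro: continuous_intros simp: vmf_moment_def)

lemma f2_eq_moment_ratio: "4 \<le> p \<Longrightarrow> f2 p \<kappa> = vmf_moment (p + 2) \<kappa> 0 / vmf_moment p \<kappa> 0"
  unfolding f2_def vmf_moment_def
  by (subst vmf_expect_eq_integral_div_moment)
    (auto intro!: continuous_intros integral_cong simp: vmf_moment_def vmf_weight_add2[symmetric])

lemma f2_nonneg: "0 \<le> f2 p \<kappa>"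
  unfolding f2_def by (rule vmf_expect_nonneg) (simp add: abs_square_le_1 abs_le_iff)

lemma e2t_nonneg: "0 \<le> e2t p \<kappa>"
  unfolding e2t_def by (rule vmf_expect_nonneg) simp

lemma e2t_eq_one_minus_f2_minus_e1_sq:
  assumes "4 \<le> p" "0 < \<kappa>"
  shows "e2t p \<kappa> = 1 - f2 p \<kappa> - (e1 p \<kappa>)\<^sup>2"
proof -
  let ?w = "vmf_weight p \<kappa>" and ?Z = "vmf_moment p \<kappa>" and ?m = "e1 p \<kappa>"
  have Z0: "0 < ?Z 0" using vmf_moment_0_pos assms by blast
  have "integral {-1..1} (\<lambda>t. (t - ?m)\<^sup>2 * ?w t) =
      integral {-1..1} (\<lambda>t. t ^ 2 * ?w t - (2 * ?m) * (t ^ 1 * ?w t) + ?m\<^sup>2 * (t ^ 0 * ?w t))"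
    by (simp add: algebra_simps power2_eq_square)
  also have "\<dots> = ?Z 2 - 2 * ?m * ?Z 1 + ?m\<^sup>2 * ?Z 0"
    by (intro integral_unique has_integral_diff has_integral_add has_integral_mult_right
        has_integral_vmf_moment assms)
  moreover have "e2t p \<kappa> = integral {-1..1} (\<lambda>t. (t - ?m)\<^sup>2 * ?w t) / ?Z 0"
    unfolding e2t_def by (rule vmf_expect_eq_integral_div_moment) (intro continuous_intros assms)+
  ultimately have "e2t p \<kappa> = (?Z 2 - 2 * ?m * ?Z 1 + ?m\<^sup>2 * ?Z 0) / ?Z 0"
    by simp
  then show ?thesis
    using Z0 unfolding f2_eq_moment_ratio[OF assms(1)] e1_eq_moment_ratio[OF assms(1)]
      vmf_moment_add2[OF assms(1)]
    by (simp add: field_simps power2_eq_square numeral_2_eq_2)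
qed

lemma kappa_mult_f2:
  assumes "4 \<le> p" "0 < \<kappa>"
  shows "\<kappa> * f2 p \<kappa> = (real p - 1) * e1 p \<kappa>"
  using vmf_moment_recurrence[OF assms(1), of 0 \<kappa>] vmf_moment_0_pos[OF assms]
  unfolding f2_eq_moment_ratio[OF assms(1)] e1_eq_moment_ratio[OF assms(1)]
    vmf_moment_add2[OF assms(1)]
  by (simp add: field_simps)

lemma f2_eq_mult_e1:
  assumes "4 \<le> p" "0 < \<kappa>"
  shows "f2 p \<kappa> = (real p - 1) / \<kappa> * e1 p \<kappa>"
  using kappa_mult_f2[OF assms] assms(2) by (simp add: field_simps)

lemma f2_mult_add_kappa_e1:
  assumes "4 \<le> p" "0 < \<kappa>"
  shows "f2 p \<kappa> * (real p + \<kappa> * e1 (p + 2) \<kappa>) = real p - 1"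
proof -
  have p2: "4 \<le> p + 2" using assms(1) by simp
  define Z where "Z = vmf_moment p \<kappa>"
  have Z0: "0 < Z 0" unfolding Z_def using vmf_moment_0_pos[OF assms] .
  have Z02: "0 < Z 0 - Z 2"
    using vmf_moment_0_pos[OF p2 assms(2)] vmf_moment_add2[OF assms(1), of \<kappa> 0]
    by (simp add: Z_def numeral_2_eq_2)
  have rec: "(Z 0 - Z 2) + \<kappa> * (Z 1 - Z 3) = (real p - 1) * Z 2"
    using vmf_moment_recurrence[OF assms(1), of 1 \<kappa>]
    by (simp add: Z_def numeral_2_eq_2 numeral_3_eq_3)
  have "f2 p \<kappa> * (real p + \<kappa> * e1 (p + 2) \<kappa>)
      = (Z 0 - Z 2) / Z 0 * (real p + \<kappa> * ((Z 1 - Z 3) / (Z 0 - Z 2)))"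
    unfolding f2_eq_moment_ratio[OF assms(1)] e1_eq_moment_ratio[OF p2] vmf_moment_add2[OF assms(1)]
    by (simp add: Z_def numeral_2_eq_2 numeral_3_eq_3)
  also have "\<dots> = (real p * (Z 0 - Z 2) + \<kappa> * (Z 1 - Z 3)) / Z 0"
    using Z0 Z02 by (simp add: field_simps)
  also have "\<dots> = real p - 1"
    using Z0 rec by (simp add: field_simps)
  finally show ?thesis .
qed

lemma e1_nonneg:
  assumes "4 \<le> p" "0 < \<kappa>"
  shows "0 \<le> e1 p \<kappa>"
proof -
  have "0 \<le> (real p - 1) * e1 p \<kappa>"
    using kappa_mult_f2[OF assms] f2_nonneg[of p \<kappa>] assms(2)
    by (metis less_imp_le mult_nonneg_nonneg)
  then show ?thesis using assms(1) by (simp add: zero_le_mult_iff)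
qed

lemma kappa_mult_e1_nonneg: "4 \<le> p \<Longrightarrow> 0 < \<kappa> \<Longrightarrow> 0 \<le> \<kappa> * e1 p \<kappa>"
  using e1_nonneg by simp

lemma e1_sq_add_f2_le_1:
  assumes "4 \<le> p" "0 < \<kappa>"
  shows "(e1 p \<kappa>)\<^sup>2 + f2 p \<kappa> \<le> 1"
  using e2t_eq_one_minus_f2_minus_e1_sq[OF assms] e2t_nonneg[of p \<kappa>] by simp

lemma e1_le_1:
  assumes "4 \<le> p" "0 < \<kappa>"
  shows "e1 p \<kappa> \<le> 1"
  using e1_sq_add_f2_le_1[OF assms] f2_nonneg[of p \<kappa>] abs_square_le_1[of "e1 p \<kappa>"] by simp

lemma f2_eq_div:
  assumes "4 \<le> p" "0 < \<kappa>"
  shows "f2 p \<kappa> = (real p - 1) / (real p + \<kappa> * e1 (p + 2) \<kappa>)"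
proof -
  have "0 < real p + \<kappa> * e1 (p + 2) \<kappa>"
    using e1_nonneg[of "p + 2" \<kappa>] assms by (simp add: add_pos_nonneg)
  then show ?thesis using f2_mult_add_kappa_e1[OF assms] by (simp add: field_simps)
qed

lemma e1_recursion:
  assumes "4 \<le> p" "0 < \<kappa>"
  shows "e1 p \<kappa> = \<kappa> / (real p + \<kappa> * e1 (p + 2) \<kappa>)"
proof -
  have "e1 p \<kappa> = \<kappa> * f2 p \<kappa> / (real p - 1)"
    using kappa_mult_f2[OF assms] assms(1) by (simp add: field_simps)
  then show ?thesis using assms(1) unfolding f2_eq_div[OF assms] by simp
qed

lemma e2t_recursion:
  assumes "4 \<le> p" "0 < \<kappa>"
  shows "e2t p \<kappa> = (real p - \<kappa>\<^sup>2 * e2t (p + 2) \<kappa>) / (real p + \<kappa> * e1 (p + 2) \<kappa>)\<^sup>2"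
proof -
  have p2: "4 \<le> p + 2" using assms(1) by simp
  define B where "B = e1 (p + 2) \<kappa>"
  define D where "D = real p + \<kappa> * B"
  have D: "0 < D" unfolding D_def B_def
    using e1_nonneg[OF p2 assms(2)] assms by (simp add: add_pos_nonneg)
  have mean: "e1 p \<kappa> = \<kappa> / D" using e1_recursion[OF assms] by (simp add: D_def B_def)
  have f2_D: "f2 p \<kappa> = (real p - 1) / D" using f2_eq_div[OF assms] by (simp add: D_def B_def)
  have "\<kappa>\<^sup>2 * f2 (p + 2) \<kappa> = (real p + 1) * (\<kappa> * B)"
    using kappa_mult_f2[OF p2 assms(2)] by (simp add: B_def power2_eq_square algebra_simps)
  then have "\<kappa>\<^sup>2 * e2t (p + 2) \<kappa> = \<kappa>\<^sup>2 - (real p + 1) * (\<kappa> * B) - (\<kappa> * B)\<^sup>2"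
    unfolding e2t_eq_one_minus_f2_minus_e1_sq[OF p2 assms(2)] B_def
    by (simp add: algebra_simps power2_eq_square)
  then have "real p - \<kappa>\<^sup>2 * e2t (p + 2) \<kappa> = D\<^sup>2 - (real p - 1) * D - \<kappa>\<^sup>2"
    by (simp add: D_def algebra_simps power2_eq_square)
  moreover have "e2t p \<kappa> = (D\<^sup>2 - (real p - 1) * D - \<kappa>\<^sup>2) / D\<^sup>2"
    using D unfolding e2t_eq_one_minus_f2_minus_e1_sq[OF assms] mean f2_D
    by (simp add: field_simps power2_eq_square)
  ultimately show ?thesis by (simp add: D_def B_def)
qed

lemma e1_le_div:
  assumes "4 \<le> p" "0 < \<kappa>"
  shows "e1 p \<kappa> \<le> \<kappa> / real p"
  unfolding e1_recursion[OF assms] using kappa_mult_e1_nonneg[of "p + 2" \<kappa>] assms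
  by (intro divide_left_mono) (auto intro!: mult_pos_pos add_pos_nonneg)

lemma kappa_mult_e1_add2_le:
  assumes "4 \<le> p" "0 < \<kappa>"
  shows "\<kappa> * e1 (p + 2) \<kappa> \<le> \<kappa>\<^sup>2 / real p"
proof -
  have "e1 (p + 2) \<kappa> \<le> \<kappa> / real (p + 2)"
    using e1_le_div[of "p + 2" \<kappa>] assms by simp
  also have "\<dots> \<le> \<kappa> / real p"
    using assms by (intro divide_left_mono) auto
  finally have "\<kappa> * e1 (p + 2) \<kappa> \<le> \<kappa> * (\<kappa> / real p)"
    by (intro mult_left_mono) (use assms(2) in auto)
  then show ?thesis by (simp add: power2_eq_square)
qed

lemma div_minus_e1_le:
  assumes "4 \<le> p" "0 < \<kappa>"
  shows "\<kappa> / real p - e1 p \<kappa> \<le> (\<kappa> / real p) ^ 3"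
proof -
  let ?x = "\<kappa> * e1 (p + 2) \<kappa>"
  have x: "0 \<le> ?x" using e1_nonneg[of "p + 2" \<kappa>] assms by simp
  have "\<kappa> / real p - e1 p \<kappa> = \<kappa> * ?x / (real p * (real p + ?x))"
    unfolding e1_recursion[OF assms] using assms x by (simp add: field_simps)
  also have "\<dots> \<le> \<kappa> * ?x / (real p * real p)"
    using assms x by (intro divide_left_mono mult_left_mono mult_pos_pos) auto
  also have "\<dots> \<le> \<kappa> * (\<kappa>\<^sup>2 / real p) / (real p * real p)"
    using kappa_mult_e1_add2_le[OF assms] assms by (intro divide_right_mono mult_left_mono) auto
  also have "\<dots> = (\<kappa> / real p) ^ 3" by (simp add: power3_eq_cube power2_eq_square)
  finally show ?thesis .
qed

lemma div_add_le_e1: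
  assumes "4 \<le> p" "0 < \<kappa>"
  shows "\<kappa> / (real p + \<kappa>) \<le> e1 p \<kappa>"
  unfolding e1_recursion[OF assms]
  using kappa_mult_e1_nonneg[of "p + 2" \<kappa>] e1_le_1[of "p + 2" \<kappa>] assms
  by (intro divide_left_mono) (auto intro!: mult_pos_pos add_pos_nonneg)

lemma f2_le_1:
  assumes "4 \<le> p" "0 < \<kappa>"
  shows "f2 p \<kappa> \<le> 1"
  unfolding f2_eq_div[OF assms] using kappa_mult_e1_nonneg[of "p + 2" \<kappa>] assms
  by (simp add: divide_le_eq add_pos_nonneg)

lemma f2_lower_bound:
  assumes "4 \<le> p" "0 < \<kappa>"
  shows "(1 - 1 / real p) / (1 + (\<kappa> / real p)\<^sup>2) \<le> f2 p \<kappa>"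
proof -
  have "real p - 1 = real p * (1 - 1 / real p)"
    and "real p + \<kappa>\<^sup>2 / real p = real p * (1 + (\<kappa> / real p)\<^sup>2)"
    using assms by (simp_all add: field_simps power2_eq_square)
  then have "(1 - 1 / real p) / (1 + (\<kappa> / real p)\<^sup>2) = (real p - 1) / (real p + \<kappa>\<^sup>2 / real p)"
    using assms by simp
  also have "\<dots> \<le> (real p - 1) / (real p + \<kappa> * e1 (p + 2) \<kappa>)"
    using kappa_mult_e1_add2_le[OF assms] kappa_mult_e1_nonneg[of "p + 2" \<kappa>] assms
    by (intro divide_left_mono) (auto intro!: mult_pos_pos add_pos_nonneg)
  finally show ?thesis unfolding f2_eq_div[OF assms] .
qed

lemma e2t_le_div:
  assumes "4 \<le> p" "0 < \<kappa>"
  shows "e2t p \<kappa> \<le> real p / (real p + \<kappa> * e1 (p + 2) \<kappa>)\<^sup>2"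
  unfolding e2t_recursion[OF assms] using e2t_nonneg[of "p + 2" \<kappa>]
  by (intro divide_right_mono) auto

lemma e2t_le_inverse:
  assumes "4 \<le> p" "0 < \<kappa>"
  shows "e2t p \<kappa> \<le> 1 / real p"
proof -
  have "0 \<le> \<kappa> * e1 (p + 2) \<kappa>" using kappa_mult_e1_nonneg[of "p + 2" \<kappa>] assms by simp
  then have "real p / (real p + \<kappa> * e1 (p + 2) \<kappa>)\<^sup>2 \<le> real p / (real p)\<^sup>2"
    using assms by (intro divide_left_mono power_mono mult_pos_pos) auto
  then show ?thesis using e2t_le_div[OF assms] assms by (simp add: power2_eq_square)
qed

lemma e2t_lower_bound:
  assumes "4 \<le> p" "0 < \<kappa>"
  shows "(1 - (\<kappa> / real p)\<^sup>2) / (1 + (\<kappa> / real p)\<^sup>2)\<^sup>2 \<le> real p * e2t p \<kappa>"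
proof (cases "\<kappa>\<^sup>2 / real p \<le> real p")
  case False
  then have "(\<kappa> / real p)\<^sup>2 \<ge> 1"
    using assms by (simp add: power_divide field_simps power2_eq_square)
  then have "(1 - (\<kappa> / real p)\<^sup>2) / (1 + (\<kappa> / real p)\<^sup>2)\<^sup>2 \<le> 0"
    by (intro divide_nonpos_nonneg) auto
  also have "0 \<le> real p * e2t p \<kappa>" using e2t_nonneg[of p \<kappa>] by simp
  finally show ?thesis .
next
  case True
  define x where "x = \<kappa>\<^sup>2 / real p"
  have p: "0 < real p" using assms by simp
  have x: "0 \<le> x" "x \<le> real p" using True by (simp_all add: x_def)
  have "\<kappa>\<^sup>2 * e2t (p + 2) \<kappa> \<le> \<kappa>\<^sup>2 * (1 / real (p + 2))"
    using e2t_le_inverse[of "p + 2" \<kappa>] assms by (intro mult_left_mono) auto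
  also have "\<dots> \<le> x" unfolding x_def using p by (simp add: divide_left_mono)
  finally have num: "real p - x \<le> real p - \<kappa>\<^sup>2 * e2t (p + 2) \<kappa>" by simp
  have "x = real p * (\<kappa> / real p)\<^sup>2" using p by (simp add: x_def power2_eq_square)
  then have "real p * (real p - x) / (real p + x)\<^sup>2
      = real p * (real p * (1 - (\<kappa> / real p)\<^sup>2)) / (real p * (1 + (\<kappa> / real p)\<^sup>2))\<^sup>2"
    by (simp add: algebra_simps)
  then have "(1 - (\<kappa> / real p)\<^sup>2) / (1 + (\<kappa> / real p)\<^sup>2)\<^sup>2 = real p * (real p - x) / (real p + x)\<^sup>2"
    using p by (simp add: power_mult_distrib power2_eq_square)
  also have "\<dots> \<le> real p * (real p - x) / (real p + \<kappa> * e1 (p + 2) \<kappa>)\<^sup>2"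
    using kappa_mult_e1_add2_le[OF assms] kappa_mult_e1_nonneg[of "p + 2" \<kappa>] assms p x
    by (intro divide_left_mono power_mono mult_nonneg_nonneg mult_pos_pos)
      (auto simp: x_def intro: add_pos_nonneg)
  also have "\<dots> \<le> real p * (real p - \<kappa>\<^sup>2 * e2t (p + 2) \<kappa>) / (real p + \<kappa> * e1 (p + 2) \<kappa>)\<^sup>2"
    using num p by (intro divide_right_mono mult_left_mono) auto
  also have "\<dots> = real p * e2t p \<kappa>" unfolding e2t_recursion[OF assms] by simp
  finally show ?thesis .
qed

lemma e2t_upper_bound:
  assumes "4 \<le> p" "0 < \<kappa>"
  shows "e2t p \<kappa> \<le> real p / \<kappa>\<^sup>2 * (1 + (real p + 2) / \<kappa>)\<^sup>2"
proof -
  have p2: "4 \<le> p + 2" using assms(1) by simp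
  have lower: "\<kappa>\<^sup>2 / (real p + 2 + \<kappa>) \<le> \<kappa> * e1 (p + 2) \<kappa>"
    using mult_left_mono[OF div_add_le_e1[OF p2 assms(2)], of \<kappa>] assms(2)
    by (simp add: power2_eq_square ac_simps)
  have pos: "0 < \<kappa>\<^sup>2 / (real p + 2 + \<kappa>)" using assms by simp
  have "e2t p \<kappa> \<le> real p / (real p + \<kappa> * e1 (p + 2) \<kappa>)\<^sup>2" by (rule e2t_le_div[OF assms])
  also have "\<dots> \<le> real p / (\<kappa>\<^sup>2 / (real p + 2 + \<kappa>))\<^sup>2"
  proof (intro divide_left_mono power_mono mult_pos_pos zero_less_power)
    show "\<kappa>\<^sup>2 / (real p + 2 + \<kappa>) \<le> real p + \<kappa> * e1 (p + 2) \<kappa>" using lower by simp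
    then show "0 < real p + \<kappa> * e1 (p + 2) \<kappa>" using pos by linarith
  qed (use pos in auto)
  also have "\<dots> = real p / \<kappa>\<^sup>2 * (1 + (real p + 2) / \<kappa>)\<^sup>2"
    using assms by (simp add: field_simps power2_eq_square)
  finally show ?thesis .
qed

definition quadratic_root :: "real \<Rightarrow> real" where
  "quadratic_root b = (sqrt (b\<^sup>2 + 4) - b) / 2"

lemma quadratic_root_equation: "(quadratic_root b)\<^sup>2 + b * quadratic_root b = 1"
  unfolding quadratic_root_def by (simp add: power2_eq_square field_simps)

lemma le_quadratic_root:
  fixes a b :: real
  assumes "a\<^sup>2 + b * a \<le> 1"
  shows "a \<le> quadratic_root b"
proof (rule ccontr)
  let ?r = "quadratic_root b"
  assume "\<not> a \<le> ?r"
  moreover have "2 * ?r + b = sqrt (b\<^sup>2 + 4)"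
    unfolding quadratic_root_def by (simp add: field_simps)
  then have "0 < 2 * ?r + b" by (simp add: add_nonneg_pos)
  ultimately have "0 < (a - ?r) * (a + ?r + b)" by simp
  also have "\<dots> = a\<^sup>2 + b * a - ((quadratic_root b)\<^sup>2 + b * quadratic_root b)"
    by (simp add: algebra_simps power2_eq_square)
  finally show False using assms quadratic_root_equation[of b] by simp
qed

lemma tendsto_quadratic_root [tendsto_intros]:
  "(f \<longlongrightarrow> b) F \<Longrightarrow> ((\<lambda>x. quadratic_root (f x)) \<longlongrightarrow> quadratic_root b) F"
  unfolding quadratic_root_def by (intro tendsto_intros) auto

lemma quadratic_root_inverse:
  assumes "0 < \<xi>"
  shows "quadratic_root (1 / \<xi>) = \<xi> / (1/2 + sqrt (1/4 + \<xi>\<^sup>2))"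
proof -
  define R where "R = sqrt (1/4 + \<xi>\<^sup>2)"
  have R: "0 < R" "R\<^sup>2 = 1/4 + \<xi>\<^sup>2" unfolding R_def by (simp_all add: add_pos_nonneg)
  have "(1 / \<xi>)\<^sup>2 + 4 = (2 * R / \<xi>)\<^sup>2"
    using R assms by (simp add: field_simps power2_eq_square)
  then have "sqrt ((1 / \<xi>)\<^sup>2 + 4) = 2 * R / \<xi>" using R assms by simp
  then have "quadratic_root (1 / \<xi>) = (R - 1/2) / \<xi>"
    unfolding quadratic_root_def using assms by (simp add: field_simps)
  also have "\<dots> = \<xi> / (1/2 + R)"
    using R assms by (simp add: field_simps power2_eq_square add_pos_pos)
  finally show ?thesis unfolding R_def .
qed

lemma e1_le_quadratic_root:
  assumes "4 \<le> p" "0 < \<kappa>"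
  shows "e1 p \<kappa> \<le> quadratic_root ((real p - 1) / \<kappa>)"
  using e1_sq_add_f2_le_1[OF assms] unfolding f2_eq_mult_e1[OF assms] by (rule le_quadratic_root)

lemma quadratic_root_le_e1:
  assumes "4 \<le> p" "0 < \<kappa>"
  shows "1 / (real p / \<kappa> + quadratic_root ((real p + 1) / \<kappa>)) \<le> e1 p \<kappa>"
proof -
  have p2: "4 \<le> p + 2" using assms(1) by simp
  let ?B = "e1 (p + 2) \<kappa>" and ?U = "quadratic_root ((real p + 1) / \<kappa>)"
  have "?B \<le> ?U" using e1_le_quadratic_root[OF p2 assms(2)] by (simp add: add.commute)
  moreover have "0 \<le> ?B" using e1_nonneg[OF p2 assms(2)] .
  ultimately have "real p / \<kappa> + ?B \<le> real p / \<kappa> + ?U" "0 < real p / \<kappa> + ?B"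
    using assms by (auto intro: add_pos_nonneg)
  then have "1 / (real p / \<kappa> + ?U) \<le> 1 / (real p / \<kappa> + ?B)"
    by (intro divide_left_mono mult_pos_pos) auto
  also have "\<dots> = e1 p \<kappa>"
    unfolding e1_recursion[OF assms] using assms(2) by (simp add: field_simps)
  finally show ?thesis .
qed

context
  fixes p :: "nat \<Rightarrow> nat" and \<kappa> :: "nat \<Rightarrow> real"
  assumes p_div: "filterlim p at_top sequentially"
    and \<kappa>_pos: "\<And>n. 0 < \<kappa> n"
begin

lemma eventually_4_le_p: "eventually (\<lambda>n. 4 \<le> p n) sequentially"
  using p_div by (simp add: filterlim_at_top)

lemma inverse_p_tendsto_0: "(\<lambda>n. 1 / real (p n)) \<longlonglongrightarrow> 0"
  using tendsto_inverse_0_at_top[OF filterlim_compose[OF filterlim_real_sequentially p_div]]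
  by (simp add: inverse_eq_divide)

lemma e2t_bigo_inverse_p: "(\<lambda>n. e2t (p n) (\<kappa> n)) \<in> O(\<lambda>n. 1 / real (p n))"
proof (rule bigoI[where c = 1])
  show "eventually (\<lambda>n. norm (e2t (p n) (\<kappa> n)) \<le> 1 * norm (1 / real (p n))) sequentially"
    using eventually_4_le_p
  proof eventually_elim
    case (elim n)
    then show ?case using e2t_nonneg[of "p n" "\<kappa> n"] e2t_le_inverse[OF elim \<kappa>_pos] by simp
  qed
qed

lemma vmf_asymptotics_ratio_zero:
  assumes r: "(\<lambda>n. \<kappa> n / real (p n)) \<longlonglongrightarrow> 0"
  shows "(\<lambda>n. e1 (p n) (\<kappa> n) - \<kappa> n / real (p n)) \<in> O(\<lambda>n. (\<kappa> n / real (p n)) ^ 3)"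
    and "(\<lambda>n. e2t (p n) (\<kappa> n) - 1 / real (p n)) \<in> o(\<lambda>n. 1 / real (p n))"
    and "(\<lambda>n. f2 (p n) (\<kappa> n)) \<longlonglongrightarrow> 1"
proof -
  note E = eventually_4_le_p
  show "(\<lambda>n. e1 (p n) (\<kappa> n) - \<kappa> n / real (p n)) \<in> O(\<lambda>n. (\<kappa> n / real (p n)) ^ 3)"
  proof (rule bigoI[where c = 1])
    show "eventually (\<lambda>n. norm (e1 (p n) (\<kappa> n) - \<kappa> n / real (p n))
        \<le> 1 * norm ((\<kappa> n / real (p n)) ^ 3)) sequentially"
      using E
    proof eventually_elim
      case (elim n)
      then show ?case
        using e1_le_div[OF elim \<kappa>_pos] div_minus_e1_le[OF elim \<kappa>_pos] \<kappa>_pos[of n] by simp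
    qed
  qed
  have "(\<lambda>n. (1 - (\<kappa> n / real (p n))\<^sup>2) / (1 + (\<kappa> n / real (p n))\<^sup>2)\<^sup>2)
      \<longlonglongrightarrow> (1 - 0\<^sup>2) / (1 + 0\<^sup>2)\<^sup>2"
    by (intro tendsto_intros r) simp
  then have "(\<lambda>n. (1 - (\<kappa> n / real (p n))\<^sup>2) / (1 + (\<kappa> n / real (p n))\<^sup>2)\<^sup>2) \<longlonglongrightarrow> 1"
    by simp
  then have "(\<lambda>n. e2t (p n) (\<kappa> n) / (1 / real (p n))) \<longlonglongrightarrow> 1"
  proof (rule tendsto_sandwich[rotated 2, OF _ tendsto_const])
    show "eventually (\<lambda>n. (1 - (\<kappa> n / real (p n))\<^sup>2) / (1 + (\<kappa> n / real (p n))\<^sup>2)\<^sup>2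
        \<le> e2t (p n) (\<kappa> n) / (1 / real (p n))) sequentially"
      using E by eventually_elim (simp add: e2t_lower_bound[OF _ \<kappa>_pos] mult.commute)
    show "eventually (\<lambda>n. e2t (p n) (\<kappa> n) / (1 / real (p n)) \<le> 1) sequentially"
      using E
    proof eventually_elim
      case (elim n)
      then show ?case using e2t_le_inverse[OF elim \<kappa>_pos] by (simp add: field_simps)
    qed
  qed
  then show "(\<lambda>n. e2t (p n) (\<kappa> n) - 1 / real (p n)) \<in> o(\<lambda>n. 1 / real (p n))"
    by (intro asymp_equiv_imp_diff_smallo asymp_equivI')
  have "(\<lambda>n. (1 - 1 / real (p n)) / (1 + (\<kappa> n / real (p n))\<^sup>2)) \<longlonglongrightarrow> (1 - 0) / (1 + 0\<^sup>2)"
    by (intro tendsto_intros inverse_p_tendsto_0 r) simp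
  then have "(\<lambda>n. (1 - 1 / real (p n)) / (1 + (\<kappa> n / real (p n))\<^sup>2)) \<longlonglongrightarrow> 1"
    by simp
  then show "(\<lambda>n. f2 (p n) (\<kappa> n)) \<longlonglongrightarrow> 1"
  proof (rule tendsto_sandwich[rotated 2, OF _ tendsto_const])
    show "eventually (\<lambda>n. (1 - 1 / real (p n)) / (1 + (\<kappa> n / real (p n))\<^sup>2) \<le> f2 (p n) (\<kappa> n))
        sequentially"
      using E by eventually_elim (rule f2_lower_bound[OF _ \<kappa>_pos])
    show "eventually (\<lambda>n. f2 (p n) (\<kappa> n) \<le> 1) sequentially"
      using E by eventually_elim (rule f2_le_1[OF _ \<kappa>_pos])
  qed
qed

lemma e2t_bigo_ratio_infinite:
  assumes r: "filterlim (\<lambda>n. \<kappa> n / real (p n)) at_top sequentially"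
  shows "(\<lambda>n. e2t (p n) (\<kappa> n)) \<in> O(\<lambda>n. real (p n) / (\<kappa> n)\<^sup>2)"
proof -
  have "eventually (\<lambda>n. 2 \<le> \<kappa> n / real (p n)) sequentially"
    using r by (simp add: filterlim_at_top)
  with eventually_4_le_p
  have "eventually (\<lambda>n. norm (e2t (p n) (\<kappa> n)) \<le> 4 * norm (real (p n) / (\<kappa> n)\<^sup>2)) sequentially"
  proof eventually_elim
    case (elim n)
    have "(real (p n) + 2) / \<kappa> n \<le> 1"
      using elim \<kappa>_pos[of n] by (simp add: field_simps)
    then have "(1 + (real (p n) + 2) / \<kappa> n)\<^sup>2 \<le> 2\<^sup>2"
      by (intro power_mono) (auto simp: \<kappa>_pos less_imp_le)
    then have "real (p n) / (\<kappa> n)\<^sup>2 * (1 + (real (p n) + 2) / \<kappa> n)\<^sup>2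
        \<le> real (p n) / (\<kappa> n)\<^sup>2 * 2\<^sup>2"
      by (rule mult_left_mono) simp
    with e2t_upper_bound[OF elim(1) \<kappa>_pos[of n]]
    have "e2t (p n) (\<kappa> n) \<le> real (p n) / (\<kappa> n)\<^sup>2 * 2\<^sup>2"
      by (rule order_trans)
    then show ?case using e2t_nonneg[of "p n" "\<kappa> n"] by (simp add: mult.commute power2_eq_square)
  qed
  then show ?thesis
    by (rule bigoI)
qed

lemma vmf_asymptotics_ratio_infinite:
  assumes r: "filterlim (\<lambda>n. \<kappa> n / real (p n)) at_top sequentially"
  shows "(\<lambda>n. e1 (p n) (\<kappa> n)) \<longlonglongrightarrow> 1"
    and "(\<lambda>n. e2t (p n) (\<kappa> n)) \<in> O(\<lambda>n. real (p n) / (\<kappa> n)\<^sup>2)"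
    and "(\<lambda>n. f2 (p n) (\<kappa> n) - real (p n) / \<kappa> n) \<in> o(\<lambda>n. real (p n) / \<kappa> n)"
proof -
  note E = eventually_4_le_p
  have "(\<lambda>n. 1 / (inverse (\<kappa> n / real (p n)) + 1)) \<longlonglongrightarrow> 1 / (0 + 1)"
    by (intro tendsto_intros tendsto_inverse_0_at_top r) simp
  then have "(\<lambda>n. 1 / (inverse (\<kappa> n / real (p n)) + 1)) \<longlonglongrightarrow> 1"
    by simp
  then show e1: "(\<lambda>n. e1 (p n) (\<kappa> n)) \<longlonglongrightarrow> 1"
  proof (rule tendsto_sandwich[rotated 2, OF _ tendsto_const])
    show "eventually (\<lambda>n. 1 / (inverse (\<kappa> n / real (p n)) + 1) \<le> e1 (p n) (\<kappa> n)) sequentially"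
      using E
    proof eventually_elim
      case (elim n)
      have "1 / (inverse (\<kappa> n / real (p n)) + 1) = \<kappa> n / (real (p n) + \<kappa> n)"
        using elim \<kappa>_pos[of n] by (simp add: field_simps)
      then show ?case using div_add_le_e1[OF elim \<kappa>_pos] by simp
    qed
    show "eventually (\<lambda>n. e1 (p n) (\<kappa> n) \<le> 1) sequentially"
      using E by eventually_elim (rule e1_le_1[OF _ \<kappa>_pos])
  qed
  show "(\<lambda>n. e2t (p n) (\<kappa> n)) \<in> O(\<lambda>n. real (p n) / (\<kappa> n)\<^sup>2)"
    by (rule e2t_bigo_ratio_infinite[OF r])
  have "(\<lambda>n. (1 - 1 / real (p n)) * e1 (p n) (\<kappa> n)) \<longlonglongrightarrow> (1 - 0) * 1"
    by (intro tendsto_intros inverse_p_tendsto_0 e1)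
  moreover have "eventually (\<lambda>n. (1 - 1 / real (p n)) * e1 (p n) (\<kappa> n)
      = f2 (p n) (\<kappa> n) / (real (p n) / \<kappa> n)) sequentially"
    using E
  proof eventually_elim
    case (elim n)
    show ?case
      unfolding f2_eq_mult_e1[OF elim \<kappa>_pos] using elim \<kappa>_pos[of n] by (simp add: field_simps)
  qed
  ultimately have "(\<lambda>n. f2 (p n) (\<kappa> n) / (real (p n) / \<kappa> n)) \<longlonglongrightarrow> 1"
    by (simp add: Lim_transform_eventually)
  then show "(\<lambda>n. f2 (p n) (\<kappa> n) - real (p n) / \<kappa> n) \<in> o(\<lambda>n. real (p n) / \<kappa> n)"
    by (intro asymp_equiv_imp_diff_smallo asymp_equivI')
qed

lemma shifted_p_div_kappa_tendsto:
  assumes \<xi>: "0 < \<xi>" and r: "(\<lambda>n. \<kappa> n / real (p n)) \<longlonglongrightarrow> \<xi>"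
  shows "(\<lambda>n. (real (p n) + a) / \<kappa> n) \<longlonglongrightarrow> 1 / \<xi>"
proof -
  have "(\<lambda>n. inverse (\<kappa> n / real (p n)) * (1 + a * (1 / real (p n))))
      \<longlonglongrightarrow> inverse \<xi> * (1 + a * 0)"
    by (intro tendsto_intros r inverse_p_tendsto_0) (use \<xi> in simp)
  moreover have "eventually (\<lambda>n. inverse (\<kappa> n / real (p n)) * (1 + a * (1 / real (p n)))
      = (real (p n) + a) / \<kappa> n) sequentially"
    using eventually_4_le_p
  proof eventually_elim
    case (elim n)
    then show ?case using \<kappa>_pos[of n] by (simp add: field_simps)
  qed
  ultimately show ?thesis
    by (simp add: Lim_transform_eventually inverse_eq_divide)
qed

lemma vmf_asymptotics_ratio_positive:
  assumes \<xi>: "0 < \<xi>" and r: "(\<lambda>n. \<kappa> n / real (p n)) \<longlonglongrightarrow> \<xi>"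
  defines "c \<equiv> 1/2 + sqrt (1/4 + \<xi>\<^sup>2)"
  shows "(\<lambda>n. e1 (p n) (\<kappa> n)) \<longlonglongrightarrow> \<xi> / c"
    and "(\<lambda>n. e2t (p n) (\<kappa> n)) \<in> O(\<lambda>n. 1 / real (p n))"
    and "(\<lambda>n. f2 (p n) (\<kappa> n)) \<longlonglongrightarrow> 1 / c"
proof -
  note E = eventually_4_le_p
  have minus: "(\<lambda>n. (real (p n) - 1) / \<kappa> n) \<longlonglongrightarrow> 1 / \<xi>"
    using shifted_p_div_kappa_tendsto[OF \<xi> r, of "- 1"] by simp
  have "0 < c" "c\<^sup>2 = c + \<xi>\<^sup>2"
    unfolding c_def by (simp_all add: add_pos_nonneg power2_eq_square algebra_simps)
  then have c: "0 < c" "1 / \<xi> + \<xi> / c = c / \<xi>"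
    using \<xi> by (simp_all add: field_simps power2_eq_square)
  have root: "quadratic_root (1 / \<xi>) = \<xi> / c"
    unfolding c_def using quadratic_root_inverse[OF \<xi>] .
  have "(\<lambda>n. 1 / ((real (p n) + 0) / \<kappa> n + quadratic_root ((real (p n) + 1) / \<kappa> n)))
      \<longlonglongrightarrow> 1 / (1 / \<xi> + quadratic_root (1 / \<xi>))"
    using \<xi> c by (intro tendsto_intros shifted_p_div_kappa_tendsto[OF \<xi> r]) (simp_all add: root)
  then have lower: "(\<lambda>n. 1 / (real (p n) / \<kappa> n + quadratic_root ((real (p n) + 1) / \<kappa> n)))
      \<longlonglongrightarrow> \<xi> / c"
    using \<xi> c by (simp add: root)
  have upper: "(\<lambda>n. quadratic_root ((real (p n) - 1) / \<kappa> n)) \<longlonglongrightarrow> \<xi> / c"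
    using tendsto_quadratic_root[OF minus] unfolding root .
  show e1: "(\<lambda>n. e1 (p n) (\<kappa> n)) \<longlonglongrightarrow> \<xi> / c"
  proof (rule tendsto_sandwich[OF _ _ lower upper])
    show "eventually (\<lambda>n. 1 / (real (p n) / \<kappa> n + quadratic_root ((real (p n) + 1) / \<kappa> n))
        \<le> e1 (p n) (\<kappa> n)) sequentially"
      using E by eventually_elim (rule quadratic_root_le_e1[OF _ \<kappa>_pos])
    show "eventually (\<lambda>n. e1 (p n) (\<kappa> n) \<le> quadratic_root ((real (p n) - 1) / \<kappa> n)) sequentially"
      using E by eventually_elim (rule e1_le_quadratic_root[OF _ \<kappa>_pos])
  qed
  show "(\<lambda>n. e2t (p n) (\<kappa> n)) \<in> O(\<lambda>n. 1 / real (p n))"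
    by (rule e2t_bigo_inverse_p)
  have "(\<lambda>n. (real (p n) - 1) / \<kappa> n * e1 (p n) (\<kappa> n)) \<longlonglongrightarrow> 1 / \<xi> * (\<xi> / c)"
    by (intro tendsto_mult minus e1)
  moreover have "eventually (\<lambda>n. (real (p n) - 1) / \<kappa> n * e1 (p n) (\<kappa> n) = f2 (p n) (\<kappa> n))
      sequentially"
    using E by eventually_elim (simp add: f2_eq_mult_e1 \<kappa>_pos)
  ultimately show "(\<lambda>n. f2 (p n) (\<kappa> n)) \<longlonglongrightarrow> 1 / c"
    using \<xi> by (simp add: Lim_transform_eventually)
qed

end

theorem lemmaA4:
  fixes p :: "nat \<Rightarrow> nat" and \<kappa> :: "nat \<Rightarrow> real"
  assumes p_div: "filterlim p at_top sequentially"
    and \<kappa>_pos: "\<And>n. \<kappa> n > 0"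
  shows
   "(filterlim (\<lambda>n. \<kappa> n / real (p n)) at_top sequentially \<longrightarrow>
       (\<lambda>n. e1 (p n) (\<kappa> n)) \<longlonglongrightarrow> 1 \<and>
       (\<lambda>n. e2t (p n) (\<kappa> n)) \<in> O[sequentially](\<lambda>n. real (p n) / (\<kappa> n)\<^sup>2) \<and>
       (\<lambda>n. f2 (p n) (\<kappa> n) - real (p n) / \<kappa> n) \<in> o[sequentially](\<lambda>n. real (p n) / \<kappa> n))
    \<and>
    (\<forall>\<xi>>0. ((\<lambda>n. \<kappa> n / real (p n)) \<longlonglongrightarrow> \<xi>) \<longrightarrow>
       (let c = 1/2 + sqrt (1/4 + \<xi>\<^sup>2) in
        (\<lambda>n. e1 (p n) (\<kappa> n)) \<longlonglongrightarrow> \<xi> / c \<and>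
        (\<lambda>n. e2t (p n) (\<kappa> n)) \<in> O[sequentially](\<lambda>n. 1 / real (p n)) \<and>
        (\<lambda>n. f2 (p n) (\<kappa> n)) \<longlonglongrightarrow> 1 / c))
    \<and>
    (((\<lambda>n. \<kappa> n / real (p n)) \<longlonglongrightarrow> 0) \<longrightarrow>
       (\<lambda>n. e1 (p n) (\<kappa> n) - \<kappa> n / real (p n)) \<in> O[sequentially](\<lambda>n. (\<kappa> n / real (p n)) ^ 3) \<and>
       (\<lambda>n. e2t (p n) (\<kappa> n) - 1 / real (p n)) \<in> o[sequentially](\<lambda>n. 1 / real (p n)) \<and>
       (\<lambda>n. f2 (p n) (\<kappa> n)) \<longlonglongrightarrow> 1)"
  using vmf_asymptotics_ratio_infinite[of p \<kappa>, OF p_div \<kappa>_pos]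
    vmf_asymptotics_ratio_positive[of p \<kappa>, OF p_div \<kappa>_pos]
    vmf_asymptotics_ratio_zero[of p \<kappa>, OF p_div \<kappa>_pos]
  unfolding Let_def by blast

end
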